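(* Let $G$ be a 2-connected graph with no $K_4$ minor and let $(s,t)$ be a split pair of $G$. Then there is a unique orientation of the edges of $G$ that is acyclic and has $s$ as its unique source and $t$ as its unique sink. In this orientation every simple path from $s$ to $t$ is a directed path, and every directed path can be extended to a directed path from $s$ to $t$.
   Context: A pair $(s,t)$ of distinct vertices of a 2-connected graph $G$ with no $K_4$ minor is a split pair if the graph obtained from $G$ by adding an edge between $s$ and $t$ still has no $K_4$ minor. In an oriented graph, a source is a vertex with only outgoing edges and a sink is a vertex with only incoming edges. *)

theory Defs
  imports Main
begin

definition graph :: "'a set \<Rightarrow> 'a set set \<Rightarrow> bool" where
  "graph V E \<longleftrightarrow> finite V \<and> (\<forall>e\<in>E. \<exists>u v. e = {u, v} \<and> u \<noteq> v \<and> u \<in> V \<and> v \<in> V)"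

definition adj_in :: "'a set set \<Rightarrow> 'a set \<Rightarrow> ('a \<times> 'a) set" where
  "adj_in E S = {(u, v). u \<in> S \<and> v \<in> S \<and> {u, v} \<in> E}"

definition connected_set :: "'a set set \<Rightarrow> 'a set \<Rightarrow> bool" where
  "connected_set E S \<longleftrightarrow> S \<noteq> {} \<and> (\<forall>u\<in>S. \<forall>v\<in>S. (u, v) \<in> (adj_in E S)\<^sup>*)"

definition two_connected :: "'a set \<Rightarrow> 'a set set \<Rightarrow> bool" where
  "two_connected V E \<longleftrightarrow> card V \<ge> 3 \<and> connected_set E V \<and>
     (\<forall>x\<in>V. connected_set E (V - {x}))"

definition has_K4_minor :: "'a set \<Rightarrow> 'a set set \<Rightarrow> bool" where
  "has_K4_minor V E \<longleftrightarrow> (\<exists>B :: nat \<Rightarrow> 'a set.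
      (\<forall>i<4. B i \<subseteq> V \<and> connected_set E (B i)) \<and>
      (\<forall>i<4. \<forall>j<4. i \<noteq> j \<longrightarrow> B i \<inter> B j = {} \<and>
          (\<exists>u\<in>B i. \<exists>v\<in>B j. {u, v} \<in> E)))"

definition split_pair :: "'a set \<Rightarrow> 'a set set \<Rightarrow> 'a \<Rightarrow> 'a \<Rightarrow> bool" where
  "split_pair V E s t \<longleftrightarrow> s \<in> V \<and> t \<in> V \<and> s \<noteq> t \<and>
     \<not> has_K4_minor V (insert {s, t} E)"

definition orientation :: "'a set set \<Rightarrow> ('a \<times> 'a) set \<Rightarrow> bool" where
  "orientation E D \<longleftrightarrow> (\<forall>(u, v)\<in>D. {u, v} \<in> E) \<and>
     (\<forall>u v. {u, v} \<in> E \<longrightarrow> ((u, v) \<in> D \<longleftrightarrow> (v, u) \<notin> D))"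

definition is_source :: "('a \<times> 'a) set \<Rightarrow> 'a \<Rightarrow> bool" where
  "is_source D v \<longleftrightarrow> (\<forall>u. (u, v) \<notin> D)"

definition is_sink :: "('a \<times> 'a) set \<Rightarrow> 'a \<Rightarrow> bool" where
  "is_sink D v \<longleftrightarrow> (\<forall>u. (v, u) \<notin> D)"

definition simple_path :: "'a set \<Rightarrow> 'a set set \<Rightarrow> 'a list \<Rightarrow> bool" where
  "simple_path V E p \<longleftrightarrow> p \<noteq> [] \<and> distinct p \<and> set p \<subseteq> V \<and>
     (\<forall>i. Suc i < length p \<longrightarrow> {p ! i, p ! Suc i} \<in> E)"

definition dir_path :: "'a set \<Rightarrow> ('a \<times> 'a) set \<Rightarrow> 'a list \<Rightarrow> bool" where
  "dir_path V D p \<longleftrightarrow> p \<noteq> [] \<and> distinct p \<and> set p \<subseteq> V \<and>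
     (\<forall>i. Suc i < length p \<longrightarrow> (p ! i, p ! Suc i) \<in> D)"

end

theory Submission
  imports Defs
begin

(* The
   orientation is the canonical one: the edge ab is directed from a to b when a immediately
   precedes b on some simple s-t path (st_arcs).

   If two simple s-t paths P and Q visit two vertices in opposite orders, then
      Q together with the edge st is a cycle, and P contains two interlaced bridges of this
      cycle; cycle plus bridges yields four branch sets of a K4 minor of G + st
      (K4_from_crossing_chords, opposite_order_K4).  So for a split pair the order in which
      s-t paths visit vertices is consistent, which makes st_arcs acyclic and antisymmetric.
   2. Covering.  Using 2-connectivity, an s-t path through u can be rerouted along a detour
      avoiding u so that it uses any given edge at u (reroute_through_edge).  Hence every
      vertex and every edge lies on an s-t path, st_arcs orients every edge, and s and t are
      its only source and sink.
   3. Bipolar orientations.  In every acyclic orientation with unique source s and unique sink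
      t, any directed path extends to a directed s-t path (bipolar_extend).  Thus every arc of
      such an orientation lies on a simple s-t path, so the orientation is st_arcs; and every
      simple s-t path is directed in st_arcs by definition. *)


abbreviation walk :: "'a set set \<Rightarrow> 'a list \<Rightarrow> bool" where
  "walk F \<equiv> successively (\<lambda>x y. {x, y} \<in> F)"

lemma walk_rev: "walk F (rev xs) \<longleftrightarrow> walk F xs"
  by (simp add: insert_commute)

lemma walk_infix: "walk F (xs @ ys @ zs) \<Longrightarrow> walk F ys"
  by (simp add: successively_append_iff)

lemma simple_path_walk:
  "simple_path V E p \<longleftrightarrow> p \<noteq> [] \<and> distinct p \<and> set p \<subseteq> V \<and> walk E p"
  by (simp add: simple_path_def successively_conv_nth)

lemma graph_edge: "graph V E \<Longrightarrow> {x, y} \<in> E \<Longrightarrow> x \<noteq> y \<and> x \<in> V \<and> y \<in> V"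
  unfolding graph_def by (fastforce simp: doubleton_eq_iff)

lemma adj_in_mono: "A \<subseteq> B \<Longrightarrow> adj_in F A \<subseteq> adj_in F B"
  unfolding adj_in_def by auto

lemma walk_reaches_head:
  "walk F xs \<Longrightarrow> x \<in> set xs \<Longrightarrow> (x, hd xs) \<in> (adj_in F (set xs))\<^sup>*"
proof (induction xs)
  case (Cons y ys)
  show ?case
  proof (cases "x = y")
    case False
    then have "ys \<noteq> []" "x \<in> set ys" "walk F ys" "{y, hd ys} \<in> F"
      using Cons.prems by (auto simp: successively_Cons)
    then have "(x, hd ys) \<in> (adj_in F (set (y # ys)))\<^sup>*"
      using Cons.IH rtrancl_mono[OF adj_in_mono[of "set ys" "set (y # ys)"]] by auto
    moreover have "(hd ys, y) \<in> adj_in F (set (y # ys))"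
      using \<open>ys \<noteq> []\<close> \<open>{y, hd ys} \<in> F\<close> by (auto simp: adj_in_def insert_commute)
    ultimately show ?thesis
      by simp
  qed simp
qed simp

lemma walk_connected:
  assumes "walk F xs" "xs \<noteq> []"
  shows "connected_set F (set xs)"
  unfolding connected_set_def
proof (intro conjI ballI)
  fix u v assume "u \<in> set xs" "v \<in> set xs"
  have "sym ((adj_in F (set xs))\<^sup>*)"
    by (intro sym_rtrancl) (auto simp: sym_def adj_in_def insert_commute)
  then have "(hd xs, v) \<in> (adj_in F (set xs))\<^sup>*"
    using walk_reaches_head[OF assms(1) \<open>v \<in> set xs\<close>] by (rule symD)
  then show "(u, v) \<in> (adj_in F (set xs))\<^sup>*"
    using walk_reaches_head[OF assms(1) \<open>u \<in> set xs\<close>] by (rule rtrancl_trans[rotated])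
qed (use assms(2) in simp)


definition adjacent :: "'a set set \<Rightarrow> 'a set \<Rightarrow> 'a set \<Rightarrow> bool" where
  "adjacent F A B \<longleftrightarrow> (\<exists>u\<in>A. \<exists>v\<in>B. {u, v} \<in> F)"

lemma adjacentI: "u \<in> A \<Longrightarrow> v \<in> B \<Longrightarrow> {u, v} \<in> F \<Longrightarrow> adjacent F A B"
  unfolding adjacent_def by blast

lemma adjacent_sym: "adjacent F A B \<Longrightarrow> adjacent F B A"
  unfolding adjacent_def by (metis insert_commute)

lemma K4_minorI:
  fixes B :: "nat \<Rightarrow> 'a set"
  assumes "\<forall>i<4. B i \<subseteq> V \<and> connected_set F (B i)"
    and "\<forall>i<4. \<forall>j<4. i < j \<longrightarrow> B i \<inter> B j = {} \<and> adjacent F (B i) (B j)"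
  shows "has_K4_minor V F"
proof -
  have "B i \<inter> B j = {} \<and> adjacent F (B i) (B j)" if "i < 4" "j < 4" "i \<noteq> j" for i j
    using assms(2) that adjacent_sym by (metis Int_commute linorder_neqE_nat)
  then show ?thesis
    unfolding has_K4_minor_def adjacent_def using assms(1) by blast
qed

lemma all_less_four: "(\<forall>i<(4::nat). P i) \<longleftrightarrow> P 0 \<and> P 1 \<and> P 2 \<and> P 3"
  by (auto simp: numeral_eq_Suc less_Suc_eq)

lemma K4_minor_from_walks:
  assumes "walk F W0" "walk F W1" "walk F W2" "walk F W3"
    and "W0 \<noteq> []" "W1 \<noteq> []" "W2 \<noteq> []" "W3 \<noteq> []"
    and "distinct (W0 @ W1 @ W2 @ W3)" "set (W0 @ W1 @ W2 @ W3) \<subseteq> V"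
    and "adjacent F (set W0) (set W1)" "adjacent F (set W0) (set W2)" "adjacent F (set W0) (set W3)"
    and "adjacent F (set W1) (set W2)" "adjacent F (set W1) (set W3)" "adjacent F (set W2) (set W3)"
  shows "has_K4_minor V F"
proof (rule K4_minorI[of "(!) [set W0, set W1, set W2, set W3]"])
  show "\<forall>i<4. [set W0, set W1, set W2, set W3] ! i \<subseteq> V \<and>
      connected_set F ([set W0, set W1, set W2, set W3] ! i)"
    using assms(10) walk_connected[OF assms(1,5)] walk_connected[OF assms(2,6)]
      walk_connected[OF assms(3,7)] walk_connected[OF assms(4,8)]
    by (simp add: all_less_four)
qed (use assms(9,11-16) in \<open>auto simp: all_less_four\<close>)

(* A cycle C = R Qa Qb Qc Qd (closed by the edge between its ends) with two disjoint chord
   paths X from Qa to Qc and Y from Qb to Qd, internally disjoint from C, is a K4 minor: the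
   branch sets are Qa + X, Qb + Y, Qc and Qd + R. *)
lemma K4_from_crossing_chords:
  fixes R Qa Qb Qc Qd X Y :: "'a list"
  defines "C \<equiv> R @ Qa @ Qb @ Qc @ Qd"
  assumes cycle: "walk F C" "{hd C, last C} \<in> F" "distinct C"
    and arcs: "Qa \<noteq> []" "Qb \<noteq> []" "Qc \<noteq> []" "Qd \<noteq> []"
    and chords: "walk F (hd Qa # X @ [hd Qc])" "walk F (hd Qb # Y @ [hd Qd])" "distinct X" "distinct Y"
    and off_cycle: "set X \<inter> set C = {}" "set Y \<inter> set C = {}" "set X \<inter> set Y = {}"
    and in_V: "set C \<union> set X \<union> set Y \<subseteq> V"
  shows "has_K4_minor V F"
proof -
  have closing_edge: "R \<noteq> [] \<Longrightarrow> {last Qd, hd R} \<in> F" "R = [] \<Longrightarrow> {hd Qa, last Qd} \<in> F"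
    using cycle(2) arcs by (auto simp: C_def insert_commute)
  have cycle_edges: "{last Qa, hd Qb} \<in> F" "{last Qb, hd Qc} \<in> F" "{last Qc, hd Qd} \<in> F"
    "R \<noteq> [] \<Longrightarrow> {hd Qa, last R} \<in> F"
    using cycle(1) arcs by (auto simp: C_def successively_append_iff insert_commute)
  have chord_starts: "walk F X" "X \<noteq> [] \<Longrightarrow> {hd Qa, hd X} \<in> F"
    "walk F Y" "Y \<noteq> [] \<Longrightarrow> {hd Qb, hd Y} \<in> F"
    using chords by (auto simp: successively_Cons successively_append_iff hd_append)
  have chord_ends: "{last (hd Qa # X), hd Qc} \<in> F" "{last (hd Qb # Y), hd Qd} \<in> F"
    using chords successively_append_iff[of _ "hd Qa # X" "[hd Qc]"]
      successively_append_iff[of _ "hd Qb # Y" "[hd Qd]"] by simp_all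
  have ends: "last (hd Qa # X) \<in> set Qa \<union> set X" "last (hd Qb # Y) \<in> set Qb \<union> set Y"
    using arcs by (auto simp: last_ConsR)
  show ?thesis
  proof (rule K4_minor_from_walks)
    show "walk F (rev Qa @ X)" "walk F (rev Qb @ Y)" "walk F Qc" "walk F (Qd @ R)"
      using cycle(1) chord_starts arcs closing_edge
      by (auto simp: C_def successively_append_iff last_rev walk_rev simp del: successively_rev)
    show "adjacent F (set (rev Qa @ X)) (set (rev Qb @ Y))"
      by (rule adjacentI[OF _ _ cycle_edges(1)]) (simp_all add: arcs)
    show "adjacent F (set (rev Qa @ X)) (set Qc)"
      by (rule adjacentI[OF _ _ chord_ends(1)]) (use ends(1) arcs in auto)
    show "adjacent F (set (rev Qa @ X)) (set (Qd @ R))"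
    proof (cases "R = []")
      case True
      then show ?thesis
        by (intro adjacentI[OF _ _ closing_edge(2)]) (simp_all add: arcs)
    next
      case False
      then show ?thesis
        by (intro adjacentI[OF _ _ cycle_edges(4)]) (simp_all add: arcs)
    qed
    show "adjacent F (set (rev Qb @ Y)) (set Qc)"
      by (rule adjacentI[OF _ _ cycle_edges(2)]) (simp_all add: arcs)
    show "adjacent F (set (rev Qb @ Y)) (set (Qd @ R))"
      by (rule adjacentI[OF _ _ chord_ends(2)]) (use ends(2) arcs in auto)
    show "adjacent F (set Qc) (set (Qd @ R))"
      by (rule adjacentI[OF _ _ cycle_edges(3)]) (simp_all add: arcs)
  qed (use arcs cycle(3) chords(3,4) off_cycle in_V in \<open>auto simp: C_def\<close>)
qed

(* Two bridges of the cycle C = L a M b R are interlaced when the first joins a and b and the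
   second joins the arc M to the opposite arc L R; they are then crossing chords. *)
lemma K4_from_interlaced_bridges:
  fixes L M R X Y :: "'a list" and a b c d :: 'a
  defines "C \<equiv> L @ a # M @ b # R"
  assumes cycle: "walk F C" "{hd C, last C} \<in> F" "distinct C"
    and bridges: "walk F (a # X @ [b])" "walk F (c # Y @ [d])" "distinct X" "distinct Y"
    and interlaced: "c \<in> set M" "d \<in> set L \<union> set R"
    and off_cycle: "set X \<inter> set C = {}" "set Y \<inter> set C = {}" "set X \<inter> set Y = {}"
    and in_V: "set C \<union> set X \<union> set Y \<subseteq> V"
  shows "has_K4_minor V F"
proof -
  obtain M1 M2 where M: "M = M1 @ c # M2"
    using interlaced(1) by (meson split_list)
  from interlaced(2) show ?thesis
  proof
    assume "d \<in> set L"
    then obtain L1 L2 where "L = L1 @ d # L2"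
      by (meson split_list)
    then have "C = L1 @ (d # L2) @ (a # M1) @ (c # M2) @ (b # R)"
      unfolding C_def M by simp
    moreover have "walk F (d # rev Y @ [c])"
      using bridges(2) walk_rev[of F "c # Y @ [d]"] by simp
    ultimately show ?thesis
      using K4_from_crossing_chords[where R=L1 and Qa="d # L2" and Qb="a # M1" and Qc="c # M2"
        and Qd="b # R" and X="rev Y" and Y=X]
        cycle bridges(1,3,4) off_cycle in_V by auto
  next
    assume "d \<in> set R"
    then obtain R1 R2 where "R = R1 @ d # R2"
      by (meson split_list)
    then have "C = L @ (a # M1) @ (c # M2) @ (b # R1) @ (d # R2)"
      unfolding C_def M by simp
    then show ?thesis
      using K4_from_crossing_chords[where R=L and Qa="a # M1" and Qb="c # M2" and Qc="b # R1"
        and Qd="d # R2" and X=X and Y=Y]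
        cycle bridges off_cycle in_V by auto
  qed
qed

(* A path that starts in A and ends in B, and meets C only in A \<union> B, contains a bridge:
   a subpath from A to B whose interior avoids C (take the first vertex in B and the last
   vertex of C before it). *)
lemma walk_bridge:
  assumes "walk F w" "distinct w" "w \<noteq> []" "hd w \<in> A" "last w \<in> B" "A \<inter> B = {}" "A \<subseteq> C"
    and "set w \<inter> C \<subseteq> A \<union> B"
  obtains a X b where "walk F (a # X @ [b])" "distinct (a # X @ [b])" "a \<in> A" "b \<in> B"
    "set (a # X @ [b]) \<subseteq> set w" "set X \<inter> C = {}"
proof -
  have "\<exists>x\<in>set w. x \<in> B"
    using assms(3,5) last_in_set by blast
  then obtain w0 b w2 where w: "w = w0 @ b # w2" "b \<in> B" "\<forall>y\<in>set w0. y \<notin> B"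
    using split_list_first_prop[of w "\<lambda>x. x \<in> B"] by blast
  have "w0 \<noteq> []"
    using w assms(4,6) by auto
  then have "\<exists>x\<in>set w0. x \<in> C"
    using w assms(4,7) by (metis hd_append2 hd_in_set subsetD)
  then obtain w1 a X where w0: "w0 = w1 @ a # X" "a \<in> C" "\<forall>z\<in>set X. z \<notin> C"
    using split_list_last_prop[of w0 "\<lambda>x. x \<in> C"] by blast
  have "a \<in> A"
    using w w0 assms(8) by auto
  moreover have split: "w = w1 @ (a # X @ [b]) @ w2"
    using w w0 by simp
  then have "walk F (a # X @ [b])"
    using assms(1) walk_infix by metis
  moreover have "distinct (a # X @ [b])" "set (a # X @ [b]) \<subseteq> set w" "set X \<inter> C = {}"
    using split w0 assms(2) by auto
  ultimately show ?thesis
    using that w(2) by blast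
qed

(* Given a bridge from a to b of the cycle C = L a M b R, any path from the arc M to the
   opposite arc that avoids a, b and the bridge contains a second, interlaced bridge. *)
lemma K4_from_bridge_and_path:
  fixes L M R X w :: "'a list" and a b :: 'a
  defines "C \<equiv> L @ a # M @ b # R"
  assumes cycle: "walk F C" "{hd C, last C} \<in> F" "distinct C"
    and bridge: "walk F (a # X @ [b])" "distinct X" "set X \<inter> set C = {}"
    and path: "walk F w" "distinct w" "w \<noteq> []" "hd w \<in> set M" "last w \<in> set L \<union> set R"
    and avoids: "a \<notin> set w" "b \<notin> set w" "set X \<inter> set w = {}"
    and in_V: "set C \<union> set X \<union> set w \<subseteq> V"
  shows "has_K4_minor V F"
proof -
  obtain c Y d where bridge2: "walk F (c # Y @ [d])" "distinct (c # Y @ [d])" "c \<in> set M"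
    "d \<in> set L \<union> set R" "set (c # Y @ [d]) \<subseteq> set w" "set Y \<inter> set C = {}"
  proof (rule walk_bridge[OF path])
    show "set M \<inter> (set L \<union> set R) = {}" "set M \<subseteq> set C"
      using cycle(3) unfolding C_def by auto
    show "set w \<inter> set C \<subseteq> set M \<union> (set L \<union> set R)"
      using avoids unfolding C_def by auto
  qed
  moreover have "set X \<inter> set Y = {}" "set Y \<subseteq> V"
    using bridge2(5) avoids(3) in_V by auto
  ultimately show ?thesis
    using K4_from_interlaced_bridges[OF cycle[unfolded C_def] bridge(1) _ bridge(2) _ _ _
        bridge(3)[unfolded C_def]] in_V
    unfolding C_def by auto
qed


definition st_path :: "'a set \<Rightarrow> 'a set set \<Rightarrow> 'a \<Rightarrow> 'a \<Rightarrow> 'a list \<Rightarrow> bool" where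
  "st_path V E s t p \<longleftrightarrow> simple_path V E p \<and> hd p = s \<and> last p = t"

lemma st_path_walk:
  "st_path V E s t p \<longleftrightarrow> p \<noteq> [] \<and> distinct p \<and> set p \<subseteq> V \<and> walk E p \<and> hd p = s \<and> last p = t"
  unfolding st_path_def simple_path_walk by blast

(* Q plus st is a cycle; the part of P up to x gives a bridge from a
   (before y) to b (after y) on Q, and the part of P from y crosses from the arc between a and
   b to the opposite arc. *)
lemma opposite_order_K4:
  assumes P: "st_path V E s t (P1 @ x # P2 @ y # P3)"
    and Q: "st_path V E s t (Q1 @ y # Q2 @ x # Q3)"
  shows "has_K4_minor V (insert {s, t} E)"
proof -
  define p where "p = P1 @ x # P2 @ y # P3"
  define q where "q = Q1 @ y # Q2 @ x # Q3"
  have p: "distinct p" "set p \<subseteq> V" "walk E p" "hd p = s" "last p = t"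
    using P unfolding p_def st_path_walk by blast+
  have q: "distinct q" "set q \<subseteq> V" "walk E q" "hd q = s" "last q = t"
    using Q unfolding q_def st_path_walk by blast+
  have "Q1 \<noteq> []" "P3 \<noteq> []"
    using p q unfolding p_def q_def by (cases P1; cases Q3 rule: rev_cases; auto)+
  then have ends: "s \<in> set Q1" "t \<in> set P3"
    using p(5) q(4) unfolding p_def q_def by (auto simp: hd_append)
  have "walk E (P1 @ [x])"
    using p(3) walk_infix[of E "[]" "P1 @ [x]" "P2 @ y # P3"] unfolding p_def by simp
  then obtain a X b where bridge: "walk E (a # X @ [b])" "distinct (a # X @ [b])" "a \<in> set Q1"
      "b \<in> set (Q2 @ x # Q3)" "set (a # X @ [b]) \<subseteq> set (P1 @ [x])" "set X \<inter> set q = {}"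
  proof (rule walk_bridge[where C="set q"])
    show "hd (P1 @ [x]) \<in> set Q1"
      using p(4) ends(1) unfolding p_def by (cases P1) auto
    show "set Q1 \<inter> set (Q2 @ x # Q3) = {}" "set (P1 @ [x]) \<inter> set q \<subseteq> set Q1 \<union> set (Q2 @ x # Q3)"
      using p(1) q(1) unfolding p_def q_def by auto
  qed (use p(1) in \<open>auto simp: p_def q_def\<close>)
  obtain L M1 M2 R where Q1: "Q1 = L @ a # M1" and Q23: "Q2 @ x # Q3 = M2 @ b # R"
    using bridge(3,4) by (meson split_list)
  have q_split: "q = L @ a # (M1 @ y # M2) @ b # R"
    unfolding q_def Q1 using Q23 by simp
  have "b \<noteq> t"
    using bridge(5) ends(2) p(1) unfolding p_def by auto
  then have t_R: "t \<in> set R"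
    using q(5) q_split by (cases R rule: rev_cases) auto
  have tail: "walk E (y # P3)"
    using p(3) walk_infix[of E "P1 @ x # P2" "y # P3" "[]"] unfolding p_def by simp
  have avoids: "a \<notin> set (y # P3)" "b \<notin> set (y # P3)" "set X \<inter> set (y # P3) = {}"
    using bridge(5) p(1) unfolding p_def by auto
  show ?thesis
  proof (rule K4_from_bridge_and_path[where L=L and M="M1 @ y # M2" and R=R and X=X
        and w="y # P3" and a=a and b=b, folded q_split])
    show "walk (insert {s, t} E) q" "walk (insert {s, t} E) (a # X @ [b])"
      "walk (insert {s, t} E) (y # P3)"
      using q(3) bridge(1) tail by (auto elim: successively_mono)
  qed (use q bridge p t_R avoids in \<open>auto simp: p_def q_split\<close>)
qed

lemma split_pair_consistent_order:
  assumes "split_pair V E s t"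
    and "st_path V E s t (A @ a # B @ b # C)" "st_path V E s t (A' @ b # B' @ a # C')"
  shows False
  using opposite_order_K4[OF assms(2,3)] assms(1) unfolding split_pair_def by simp


lemma path_to_first_hit:
  assumes "(v, w) \<in> (adj_in E S)\<^sup>*" "w \<in> T" "v \<in> S"
  shows "\<exists>R. R \<noteq> [] \<and> hd R = v \<and> last R \<in> T \<and> set R \<subseteq> S \<and> distinct R \<and> walk E R \<and>
             set (butlast R) \<inter> T = {}"
  using assms(1,3)
proof (induction rule: converse_rtrancl_induct)
  case base
  then show ?case
    using assms(2) by (intro exI[of _ "[w]"]) auto
next
  case (step v v')
  have "v \<in> S" "v' \<in> S" "{v, v'} \<in> E"
    using step(1) unfolding adj_in_def by auto
  then obtain R where R: "R \<noteq> []" "hd R = v'" "last R \<in> T" "set R \<subseteq> S" "distinct R" "walk E R"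
    "set (butlast R) \<inter> T = {}"
    using step(3) by blast
  consider "v \<in> T" | "v \<notin> T" "v \<in> set R" | "v \<notin> T" "v \<notin> set R"
    by blast
  then show ?case
  proof cases
    case 1
    then show ?thesis
      using \<open>v \<in> S\<close> by (intro exI[of _ "[v]"]) auto
  next
    case 2
    then obtain A B where AB: "R = A @ v # B"
      by (meson split_list)
    have "walk E (v # B)"
      using R(6) walk_infix[of E A "v # B" "[]"] AB by simp
    moreover have "set (butlast (v # B)) \<subseteq> set (butlast R)"
      using AB by (auto simp: butlast_append)
    ultimately show ?thesis
      using R AB 2 by (intro exI[of _ "v # B"]) auto
  next
    case 3
    then show ?thesis
      using R \<open>v \<in> S\<close> \<open>{v, v'} \<in> E\<close>
      by (intro exI[of _ "v # R"]) (auto simp: successively_Cons)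
  qed
qed

lemma st_path_exists:
  assumes "connected_set E V" "s \<in> V" "t \<in> V"
  obtains p where "st_path V E s t p"
proof -
  have "(s, t) \<in> (adj_in E V)\<^sup>*"
    using assms unfolding connected_set_def by blast
  then obtain R where "R \<noteq> []" "hd R = s" "last R \<in> {t}" "set R \<subseteq> V" "distinct R" "walk E R"
    using path_to_first_hit[of s t E V "{t}"] assms(2) by blast
  then show ?thesis
    using that unfolding st_path_walk by auto
qed

lemma reroute:
  assumes "st_path V E s t (A @ x # B @ y # C)" "walk E (x # R @ [y])" "distinct R" "set R \<subseteq> V"
    and "set R \<inter> set (A @ x # B @ y # C) = {}"
  shows "st_path V E s t (A @ x # R @ y # C)"
proof -
  have p: "distinct (A @ x # B @ y # C)" "set (A @ x # B @ y # C) \<subseteq> V" "walk E (A @ x # B @ y # C)"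
    "hd (A @ x # B @ y # C) = s" "last (A @ x # B @ y # C) = t"
    using assms(1) unfolding st_path_walk by blast+
  have "walk E (A @ [x])" "walk E (y # C)"
    using p(3) walk_infix[of E "[]" "A @ [x]" "B @ y # C"] walk_infix[of E "A @ x # B" "y # C" "[]"]
    by simp_all
  then have "walk E (A @ x # R @ y # C)"
    using assms(2) by (auto simp: successively_append_iff successively_Cons hd_append)
  moreover have "hd (A @ x # R @ y # C) = s"
    using p(4) by (cases A) auto
  ultimately show ?thesis
    using p assms(3-5) unfolding st_path_walk by auto
qed

lemma reroute_between:
  assumes "st_path V E s t p" "x \<in> set p" "y \<in> set p" "x \<noteq> y"
    and "walk E (x # R @ [y])" "distinct R" "set R \<subseteq> V" "set R \<inter> set p = {}"
  shows "\<exists>A C. st_path V E s t (A @ x # R @ y # C) \<or> st_path V E s t (A @ y # rev R @ x # C)"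
proof -
  obtain A B where p: "p = A @ x # B"
    using assms(2) by (meson split_list)
  then have "y \<in> set A \<or> y \<in> set B"
    using assms(3,4) by auto
  then show ?thesis
  proof
    assume "y \<in> set A"
    then obtain A1 B1 where "A = A1 @ y # B1"
      by (meson split_list)
    moreover have "walk E (y # rev R @ [x])"
      using assms(5) walk_rev[of E "x # R @ [y]"] by simp
    ultimately have "st_path V E s t (A1 @ y # rev R @ x # B)"
      using reroute[of V E s t A1 y B1 x B "rev R"] assms(1,6-8) p by auto
    then show ?thesis
      by blast
  next
    assume "y \<in> set B"
    then obtain B1 C where "B = B1 @ y # C"
      by (meson split_list)
    then have "st_path V E s t (A @ x # R @ y # C)"
      using reroute[of V E s t A x B1 y C R] assms(1,5-8) p by auto
    then show ?thesis
      by blast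
  qed
qed

lemma detour_to_path:
  assumes "st_path V E s t p" "u \<in> set p" "v \<in> V - set p" "connected_set E (V - {u})" "s \<noteq> t"
  obtains X z where "walk E (v # X @ [z])" "distinct (v # X)" "set (v # X) \<subseteq> V"
    "set (v # X) \<inter> set p = {}" "z \<in> set p" "z \<noteq> u"
proof -
  have p: "p \<noteq> []" "hd p = s" "last p = t" "set p \<subseteq> V"
    using assms(1) unfolding st_path_walk by blast+
  define w where "w = (if u = s then t else s)"
  have "w \<in> set p - {u}"
    using p assms(5) unfolding w_def by auto
  moreover have "v \<in> V - {u}"
    using assms(2,3) by auto
  ultimately have "(v, w) \<in> (adj_in E (V - {u}))\<^sup>*"
    using assms(4) p(4) unfolding connected_set_def by blast
  then obtain R where R: "R \<noteq> []" "hd R = v" "last R \<in> set p - {u}" "set R \<subseteq> V - {u}"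
    "distinct R" "walk E R" "set (butlast R) \<inter> (set p - {u}) = {}"
    using path_to_first_hit[of v w E "V - {u}" "set p - {u}"] \<open>w \<in> set p - {u}\<close> \<open>v \<in> V - {u}\<close>
    by blast
  define z where "z = last R"
  have "butlast R \<noteq> []"
    using R(1-3) assms(3) unfolding z_def by (cases R) auto
  moreover have "R = butlast R @ [z]"
    using R(1) unfolding z_def by simp
  ultimately obtain X where "R = v # X @ [z]"
    using R(2) by (cases "butlast R") auto
  then show ?thesis
    using that[of X z] R by auto
qed

lemma reroute_through_edge:
  assumes "graph V E" "st_path V E s t p" "u \<in> set p" "{u, v} \<in> E"
    and "connected_set E (V - {u})" "s \<noteq> t"
  shows "\<exists>A B. st_path V E s t (A @ u # v # B) \<or> st_path V E s t (A @ v # u # B)"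
proof (cases "v \<in> set p")
  case True
  moreover have "u \<noteq> v"
    using graph_edge[OF assms(1,4)] by simp
  ultimately obtain A C where "st_path V E s t (A @ u # v # C) \<or> st_path V E s t (A @ v # u # C)"
    using reroute_between[of V E s t p u v "[]"] assms(2-4) by auto
  then show ?thesis
    by blast
next
  case False
  then have "v \<in> V - set p"
    using graph_edge[OF assms(1,4)] by auto
  then obtain X z where detour: "walk E (v # X @ [z])" "distinct (v # X)" "set (v # X) \<subseteq> V"
    "set (v # X) \<inter> set p = {}" "z \<in> set p" "z \<noteq> u"
    using detour_to_path[OF assms(2,3) _ assms(5,6)] by blast
  then have "walk E (u # (v # X) @ [z])"
    using assms(4) by (simp add: successively_Cons)
  then obtain A C where "st_path V E s t (A @ u # (v # X) @ z # C) \<or>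
      st_path V E s t (A @ z # rev (v # X) @ u # C)"
    using reroute_between[of V E s t p u z "v # X"] assms(2,3) detour(2-6) by blast
  then have "st_path V E s t (A @ u # v # (X @ z # C)) \<or>
      st_path V E s t ((A @ z # rev X) @ v # u # C)"
    by simp
  then show ?thesis
    by blast
qed

(* In a 2-connected graph every vertex lies on some s-t path (induction along a path from s). *)
lemma vertex_on_st_path:
  assumes "graph V E" "two_connected V E" "s \<in> V" "t \<in> V" "s \<noteq> t" "w \<in> V"
  obtains p where "st_path V E s t p" "w \<in> set p"
proof -
  have conn: "connected_set E V" "\<And>u. u \<in> V \<Longrightarrow> connected_set E (V - {u})"
    using assms(2) unfolding two_connected_def by blast+
  have "(s, w) \<in> (adj_in E V)\<^sup>*"
    using conn(1) assms(3,6) unfolding connected_set_def by blast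
  then have "\<exists>p. st_path V E s t p \<and> w \<in> set p"
  proof (induction rule: rtrancl_induct)
    case base
    obtain p where p: "st_path V E s t p"
      using st_path_exists[OF conn(1) assms(3,4)] .
    then have "s \<in> set p"
      unfolding st_path_walk by auto
    then show ?case
      using p by blast
  next
    case (step y z)
    then obtain p where p: "st_path V E s t p" "y \<in> set p"
      by (elim exE conjE)
    have "{y, z} \<in> E" "y \<in> V"
      using step(2) unfolding adj_in_def by auto
    then obtain A B where "st_path V E s t (A @ y # z # B) \<or> st_path V E s t (A @ z # y # B)"
      using reroute_through_edge[OF assms(1) p _ conn(2) assms(5)] by blast
    then show ?case
      by fastforce
  qed
  then show ?thesis
    using that by blast
qed

lemma edge_on_st_path:
  assumes "graph V E" "two_connected V E" "s \<in> V" "t \<in> V" "s \<noteq> t" "{u, v} \<in> E"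
  shows "\<exists>A B. st_path V E s t (A @ u # v # B) \<or> st_path V E s t (A @ v # u # B)"
proof -
  have "u \<in> V"
    using graph_edge[OF assms(1,6)] by blast
  then obtain p where p: "st_path V E s t p" "u \<in> set p"
    using vertex_on_st_path assms(1-5) by metis
  moreover have "connected_set E (V - {u})"
    using assms(2) \<open>u \<in> V\<close> unfolding two_connected_def by blast
  ultimately show ?thesis
    using reroute_through_edge[OF assms(1) p assms(6) _ assms(5)] by blast
qed

lemma glue:
  assumes "st_path V E s t (P1 @ y # Q1)" "st_path V E s t (P2 @ y # Q2)" "set P1 \<inter> set Q2 = {}"
  shows "st_path V E s t (P1 @ y # Q2)"
proof -
  have "walk E (P1 @ [y])" "walk E (y # Q2)"
    using assms(1,2) walk_infix[of E "[]" "P1 @ [y]" Q1] walk_infix[of E P2 "y # Q2" "[]"]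
    unfolding st_path_walk by simp_all
  then have "walk E (P1 @ y # Q2)"
    by (auto simp: successively_append_iff successively_Cons)
  moreover have "hd (P1 @ y # Q2) = s"
    using assms(1) unfolding st_path_walk by (cases P1) auto
  ultimately show ?thesis
    using assms unfolding st_path_walk by auto
qed


definition st_arcs :: "'a set \<Rightarrow> 'a set set \<Rightarrow> 'a \<Rightarrow> 'a \<Rightarrow> ('a \<times> 'a) set" where
  "st_arcs V E s t = {(a, b). \<exists>A B. st_path V E s t (A @ a # b # B)}"

definition st_precedes :: "'a set \<Rightarrow> 'a set set \<Rightarrow> 'a \<Rightarrow> 'a \<Rightarrow> ('a \<times> 'a) set" where
  "st_precedes V E s t = {(a, b). \<exists>A B C. st_path V E s t (A @ a # B @ b # C)}"

(* Transitivity: glue an s-t path through x, y to one through y, z at y; the two halves are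
   disjoint since a common vertex would be visited in opposite orders. *)
lemma st_precedes_trans:
  assumes "split_pair V E s t"
  shows "trans (st_precedes V E s t)"
proof (rule transI)
  fix x y z assume "(x, y) \<in> st_precedes V E s t" "(y, z) \<in> st_precedes V E s t"
  then obtain A1 B1 C1 A2 B2 C2 where
    xy: "st_path V E s t ((A1 @ x # B1) @ y # C1)" and yz: "st_path V E s t (A2 @ y # B2 @ z # C2)"
    unfolding st_precedes_def by auto
  have "set (A1 @ x # B1) \<inter> set (B2 @ z # C2) = {}"
  proof (rule ccontr)
    assume "set (A1 @ x # B1) \<inter> set (B2 @ z # C2) \<noteq> {}"
    then obtain w X Y X' Y' where "A1 @ x # B1 = X @ w # Y" "B2 @ z # C2 = X' @ w # Y'"
      by (metis disjoint_iff split_list)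
    then show False
      using split_pair_consistent_order[OF assms, of X w Y y C1 A2 X' Y'] xy yz by simp
  qed
  then have "st_path V E s t (A1 @ x # (B1 @ y # B2) @ z # C2)"
    using glue[OF xy yz] by simp
  then show "(x, z) \<in> st_precedes V E s t"
    unfolding st_precedes_def by blast
qed

(* The arcs lie in the strict order st_precedes, so they form no directed cycle. *)
lemma st_arcs_acyclic:
  assumes "split_pair V E s t"
  shows "acyclic (st_arcs V E s t)"
proof -
  have "st_arcs V E s t \<subseteq> st_precedes V E s t"
    unfolding st_arcs_def st_precedes_def
  proof clarify
    fix a b A B assume "st_path V E s t (A @ a # b # B)"
    then show "\<exists>A' B' C. st_path V E s t (A' @ a # B' @ b # C)"
      by (metis append_Nil)
  qed
  then have "(st_arcs V E s t)\<^sup>+ \<subseteq> st_precedes V E s t"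
    using st_precedes_trans[OF assms] by (metis trancl_id trancl_mono subsetI)
  moreover have "(x, x) \<notin> st_precedes V E s t" for x
    unfolding st_precedes_def st_path_walk by auto
  ultimately show ?thesis
    unfolding acyclic_def by blast
qed

lemma st_arcs_orientation:
  assumes "graph V E" "two_connected V E" "split_pair V E s t"
  shows "orientation E (st_arcs V E s t)"
  unfolding orientation_def
proof (intro conjI allI impI)
  show "\<forall>(u, v)\<in>st_arcs V E s t. {u, v} \<in> E"
  proof clarify
    fix u v assume "(u, v) \<in> st_arcs V E s t"
    then obtain A B where "st_path V E s t (A @ [u, v] @ B)"
      unfolding st_arcs_def by auto
    then show "{u, v} \<in> E"
      using walk_infix[of E A "[u, v]" B] unfolding st_path_walk by simp
  qed
  fix u v assume "{u, v} \<in> E"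
  have "(v, u) \<notin> st_arcs V E s t" if "(u, v) \<in> st_arcs V E s t"
    using that split_pair_consistent_order[OF assms(3), of _ u "[]" v _ _ "[]"]
    unfolding st_arcs_def by auto
  moreover have "(u, v) \<in> st_arcs V E s t \<or> (v, u) \<in> st_arcs V E s t"
    using edge_on_st_path[OF assms(1,2) _ _ _ \<open>{u, v} \<in> E\<close>] assms(3)
    unfolding split_pair_def st_arcs_def by blast
  ultimately show "(u, v) \<in> st_arcs V E s t \<longleftrightarrow> (v, u) \<notin> st_arcs V E s t"
    by blast
qed

(* s is the only source: every other vertex has a predecessor on an s-t path through it. *)
lemma st_arcs_sources:
  assumes "graph V E" "two_connected V E" "split_pair V E s t"
  shows "{v\<in>V. is_source (st_arcs V E s t) v} = {s}"
proof -
  have st: "s \<in> V" "t \<in> V" "s \<noteq> t"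
    using assms(3) unfolding split_pair_def by auto
  have "(u, s) \<notin> st_arcs V E s t" for u
    unfolding st_arcs_def st_path_walk by (auto simp: hd_append split: if_splits)
  moreover have "v = s" if "v \<in> V" "is_source (st_arcs V E s t) v" for v
  proof -
    obtain p where p: "st_path V E s t p" "v \<in> set p"
      using vertex_on_st_path[OF assms(1,2) st \<open>v \<in> V\<close>] by blast
    then obtain A B where "p = A @ v # B"
      by (meson split_list)
    then show "v = s"
    proof (cases A rule: rev_cases)
      case (snoc A' u)
      then have "(u, v) \<in> st_arcs V E s t"
        using p(1) \<open>p = A @ v # B\<close> unfolding st_arcs_def by auto
      then show ?thesis
        using that(2) unfolding is_source_def by blast
    qed (use p(1) in \<open>simp add: st_path_def\<close>)
  qed
  ultimately show ?thesis
    using st(1) unfolding is_source_def by auto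
qed

lemma st_arcs_sinks:
  assumes "graph V E" "two_connected V E" "split_pair V E s t"
  shows "{v\<in>V. is_sink (st_arcs V E s t) v} = {t}"
proof -
  have st: "s \<in> V" "t \<in> V" "s \<noteq> t"
    using assms(3) unfolding split_pair_def by auto
  have "(t, u) \<notin> st_arcs V E s t" for u
    unfolding st_arcs_def st_path_walk by auto
  moreover have "v = t" if "v \<in> V" "is_sink (st_arcs V E s t) v" for v
  proof -
    obtain p where p: "st_path V E s t p" "v \<in> set p"
      using vertex_on_st_path[OF assms(1,2) st \<open>v \<in> V\<close>] by blast
    then obtain A B where "p = A @ v # B"
      by (meson split_list)
    then show "v = t"
    proof (cases B)
      case (Cons w B')
      then have "(v, w) \<in> st_arcs V E s t"
        using p(1) \<open>p = A @ v # B\<close> unfolding st_arcs_def by auto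
      then show ?thesis
        using that(2) unfolding is_sink_def by blast
    qed (use p(1) in \<open>simp add: st_path_def\<close>)
  qed
  ultimately show ?thesis
    using st(2) unfolding is_sink_def by auto
qed

lemma st_path_directed:
  assumes "st_path V E s t p"
  shows "dir_path V (st_arcs V E s t) p"
proof -
  have "(p ! i, p ! Suc i) \<in> st_arcs V E s t" if "Suc i < length p" for i
  proof -
    have "take i p @ p ! i # p ! Suc i # drop (Suc (Suc i)) p = p"
      using that by (metis Cons_nth_drop_Suc Suc_lessD append_take_drop_id)
    then have "st_path V E s t (take i p @ p ! i # p ! Suc i # drop (Suc (Suc i)) p)"
      using assms by simp
    then show ?thesis
      unfolding st_arcs_def by blast
  qed
  then show ?thesis
    using assms unfolding dir_path_def st_path_def simple_path_def by blast
qed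


abbreviation dwalk :: "('a \<times> 'a) set \<Rightarrow> 'a list \<Rightarrow> bool" where
  "dwalk D \<equiv> successively (\<lambda>x y. (x, y) \<in> D)"

lemma dir_path_dwalk:
  "dir_path V D p \<longleftrightarrow> p \<noteq> [] \<and> distinct p \<and> set p \<subseteq> V \<and> dwalk D p"
  by (simp add: dir_path_def successively_conv_nth)

lemma dwalk_reaches: "dwalk D p \<Longrightarrow> x \<in> set p \<Longrightarrow> (hd p, x) \<in> D\<^sup>*"
proof (induction p)
  case (Cons a p)
  then show ?case
    by (cases "x = a") (auto simp: successively_Cons intro: converse_rtrancl_into_rtrancl)
qed simp

lemma acyclic_dwalk_distinct: "acyclic D \<Longrightarrow> dwalk D p \<Longrightarrow> distinct p"
proof (induction p)
  case (Cons a p)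
  have "a \<notin> set p"
  proof
    assume "a \<in> set p"
    then have "(a, hd p) \<in> D" "(hd p, a) \<in> D\<^sup>*"
      using Cons.prems(2) dwalk_reaches[of D p a] by (auto simp: successively_Cons)
    then show False
      using Cons.prems(1) unfolding acyclic_def by (meson rtrancl_into_trancl2)
  qed
  then show ?case
    using Cons by (auto simp: successively_Cons)
qed simp

lemma dwalk_to_sink:
  assumes "finite D" "acyclic D" "D \<subseteq> W \<times> W"
    and "\<And>x. x \<in> W \<Longrightarrow> x \<noteq> t \<Longrightarrow> \<exists>y. (x, y) \<in> D"
  shows "v \<in> W \<Longrightarrow> \<exists>b. dwalk D (v # b) \<and> last (v # b) = t \<and> set b \<subseteq> W"
proof (induction v rule: wf_induct[OF finite_acyclic_wf_converse[OF assms(1,2)]])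
  case (1 v)
  show ?case
  proof (cases "v = t")
    case False
    then obtain y where "(v, y) \<in> D"
      using assms(4) 1(2) by blast
    moreover obtain b where "dwalk D (y # b)" "last (y # b) = t" "set b \<subseteq> W"
      using 1(1) \<open>(v, y) \<in> D\<close> assms(3) by blast
    ultimately show ?thesis
      using assms(3) by (intro exI[of _ "y # b"]) auto
  qed (intro exI[of _ "[]"]; simp)
qed

definition bipolar :: "'a set \<Rightarrow> 'a set set \<Rightarrow> 'a \<Rightarrow> 'a \<Rightarrow> ('a \<times> 'a) set \<Rightarrow> bool" where
  "bipolar V E s t D \<longleftrightarrow> orientation E D \<and> acyclic D \<and>
     {v\<in>V. is_source D v} = {s} \<and> {v\<in>V. is_sink D v} = {t}"

(* In a bipolar orientation every directed path extends to a directed s-t path: follow arcs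
   forward to the sink and backward to the source; acyclicity keeps the result simple. *)
lemma bipolar_extend:
  assumes "graph V E" "bipolar V E s t D" "dir_path V D p"
  shows "\<exists>a b. dir_path V D (a @ p @ b) \<and> hd (a @ p @ b) = s \<and> last (a @ p @ b) = t"
proof -
  have D: "orientation E D" "acyclic D" "{v\<in>V. is_source D v} = {s}" "{v\<in>V. is_sink D v} = {t}"
    using assms(2) unfolding bipolar_def by blast+
  have DV: "D \<subseteq> V \<times> V"
    using D(1) graph_edge[OF assms(1)] unfolding orientation_def by auto
  then have "finite D"
    using assms(1) unfolding graph_def by (meson finite_SigmaI finite_subset)
  have p: "p \<noteq> []" "set p \<subseteq> V" "dwalk D p"
    using assms(3) unfolding dir_path_dwalk by blast+
  have "\<exists>y. (x, y) \<in> D" if "x \<in> V" "x \<noteq> t" for x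
    using D(4) that unfolding is_sink_def by blast
  then obtain b where b: "dwalk D (last p # b)" "last (last p # b) = t" "set b \<subseteq> V"
    using dwalk_to_sink[OF \<open>finite D\<close> D(2) DV] p(1,2) last_in_set by blast
  have "\<exists>y. (x, y) \<in> D\<inverse>" if "x \<in> V" "x \<noteq> s" for x
    using D(3) that unfolding is_source_def by blast
  moreover have "finite (D\<inverse>)" "acyclic (D\<inverse>)" "D\<inverse> \<subseteq> V \<times> V"
    using \<open>finite D\<close> D(2) DV by auto
  ultimately obtain c where c: "dwalk (D\<inverse>) (hd p # c)" "last (hd p # c) = s" "set c \<subseteq> V"
    using dwalk_to_sink[of "D\<inverse>" V s] p(1,2) hd_in_set by blast
  have "dwalk D (p @ b)"
    using p(1,3) b(1) by (auto simp: successively_append_iff successively_Cons)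
  moreover have "dwalk D (rev c @ [hd p])"
    using c(1) successively_rev[of "\<lambda>x y. (x, y) \<in> D" "hd p # c"] by simp
  ultimately have "dwalk D (rev c @ p @ b)"
    using p(1) by (auto simp: successively_append_iff)
  then have "dir_path V D (rev c @ p @ b)"
    using acyclic_dwalk_distinct[OF D(2), of "rev c @ p @ b"] p(1,2) b(3) c(3)
    unfolding dir_path_dwalk by simp
  moreover have "hd (rev c @ p @ b) = s" "last (rev c @ p @ b) = t"
    using c(2) b(2) p(1) by (auto simp: hd_append hd_rev)
  ultimately show ?thesis
    by blast
qed

lemma orientation_subset_eq:
  assumes "orientation E D1" "orientation E D2" "D1 \<subseteq> D2"
  shows "D1 = D2"
proof
  show "D2 \<subseteq> D1"
  proof clarify
    fix a b assume "(a, b) \<in> D2"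
    then have "{a, b} \<in> E" "(b, a) \<notin> D2"
      using assms(2) unfolding orientation_def by auto
    then show "(a, b) \<in> D1"
      using assms(1,3) unfolding orientation_def by blast
  qed
qed (rule assms(3))

(* Uniqueness: every arc of a bipolar orientation lies on a directed, hence simple, s-t path,
   so the orientation is contained in, and therefore equal to, the canonical one. *)
lemma bipolar_unique:
  assumes "graph V E" "two_connected V E" "split_pair V E s t" "bipolar V E s t D"
  shows "D = st_arcs V E s t"
proof (rule orientation_subset_eq)
  show "orientation E D" "orientation E (st_arcs V E s t)"
    using assms(4) st_arcs_orientation[OF assms(1-3)] unfolding bipolar_def by blast+
  show "D \<subseteq> st_arcs V E s t"
  proof clarify
    fix a b assume "(a, b) \<in> D"
    then have "{a, b} \<in> E"
      using \<open>orientation E D\<close> unfolding orientation_def by auto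
    then have "dir_path V D [a, b]"
      using \<open>(a, b) \<in> D\<close> graph_edge[OF assms(1)] unfolding dir_path_dwalk by auto
    then obtain A B where AB: "dir_path V D (A @ [a, b] @ B)" "hd (A @ [a, b] @ B) = s"
      "last (A @ [a, b] @ B) = t"
      using bipolar_extend[OF assms(1,4)] by blast
    have "walk E (A @ [a, b] @ B)"
      using AB(1) \<open>orientation E D\<close> unfolding dir_path_dwalk orientation_def
      by (auto elim: successively_mono)
    then have "st_path V E s t (A @ a # b # B)"
      using AB unfolding st_path_walk dir_path_dwalk by simp
    then show "(a, b) \<in> st_arcs V E s t"
      unfolding st_arcs_def by blast
  qed
qed


theorem lemma2p5:
  fixes V :: "'a set" and E :: "'a set set" and s t :: 'a
  assumes "graph V E" and "two_connected V E" and "\<not> has_K4_minor V E"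
    and "split_pair V E s t"
  shows "(\<exists>!D. orientation E D \<and> acyclic D \<and>
              {v\<in>V. is_source D v} = {s} \<and> {v\<in>V. is_sink D v} = {t})
       \<and> (\<forall>D. orientation E D \<and> acyclic D \<and>
              {v\<in>V. is_source D v} = {s} \<and> {v\<in>V. is_sink D v} = {t} \<longrightarrow>
            (\<forall>p. simple_path V E p \<and> hd p = s \<and> last p = t \<longrightarrow> dir_path V D p) \<and>
            (\<forall>p. dir_path V D p \<longrightarrow>
               (\<exists>a b. dir_path V D (a @ p @ b) \<and> hd (a @ p @ b) = s \<and> last (a @ p @ b) = t)))"
proof -
  have canonical: "bipolar V E s t (st_arcs V E s t)"
    unfolding bipolar_def using st_arcs_orientation[OF assms(1,2,4)] st_arcs_acyclic[OF assms(4)]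
      st_arcs_sources[OF assms(1,2,4)] st_arcs_sinks[OF assms(1,2,4)] by (intro conjI)
  have unique: "D = st_arcs V E s t" if "bipolar V E s t D" for D
    using bipolar_unique[OF assms(1,2,4) that] .
  have "\<exists>!D. bipolar V E s t D"
    using canonical unique by (rule ex1I)
  moreover have "dir_path V D p" if "bipolar V E s t D" "st_path V E s t p" for D p
    using st_path_directed[OF that(2)] unique[OF that(1)] by simp
  moreover have "\<exists>a b. dir_path V D (a @ p @ b) \<and> hd (a @ p @ b) = s \<and> last (a @ p @ b) = t"
    if "bipolar V E s t D" "dir_path V D p" for D p
    using bipolar_extend[OF assms(1) that] .
  ultimately show ?thesis
    unfolding bipolar_def[symmetric] st_path_def[symmetric]
    by (intro conjI allI impI) simp_all
qed

end
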